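(* Let $X$ be a uniformly locally finite metric space and $h$ a coarse operator on $\ell_2(X)$. If $\xi\in\mathrm{dom}(h)$, then \[ h\xi=\sum_{x\in X}\langle\xi,\delta_x\rangle h\delta_x \] (the series converging in norm). Consequently, $h$ is admissible.
   Context: Uniformly locally finite: $\sup_x|B_r(x)|<\infty$ for all $r>0$. $(\delta_x)$ canonical basis of $\ell_2(X)$, $c_{00}(X)$ finitely supported vectors. A partial translation is a bijection $f\colon\mathrm{dom}(f)\subseteq X\to\mathrm{ran}(f)\subseteq X$ with $\sup_{x}d(x,f(x))<\infty$; $v_f\delta_x=\delta_{f(x)}$ on $\mathrm{dom}(f)$, $0$ elsewhere. A closed operator $h$ is a coarse operator if $v_f(\mathrm{dom}(h))\subseteq\mathrm{dom}(h)$ and $hv_f-v_fh$ is bounded on $\mathrm{dom}(h)$ for every partial translation $f$. An operator $h$ is admissible if it is closed, $c_{00}(X)\subseteq\mathrm{dom}(h)$, and $h\xi=\sum_y\langle\xi,\delta_y\rangle h\delta_y$ for all $\xi\in\mathrm{dom}(h)$. *)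

theory Defs
  imports "HOL-Analysis.Analysis" "HOL-Library.Function_Algebras"
begin

text \<open>The metric space X is the universe of a type of class metric_space.
  Vectors of l2(X) are functions X => complex with square-summable modulus.\<close>

definition uniformly_locally_finite :: "'a::metric_space itself \<Rightarrow> bool" where
  "uniformly_locally_finite _ \<longleftrightarrow>
     (\<forall>r>0. \<exists>N::nat. \<forall>x::'a. finite (ball x r) \<and> card (ball x r) \<le> N)"

definition l2 :: "('a \<Rightarrow> complex) set" where
  "l2 = {\<xi>. (\<lambda>x. (cmod (\<xi> x))\<^sup>2) summable_on UNIV}"

definition l2_norm :: "('a \<Rightarrow> complex) \<Rightarrow> real" where
  "l2_norm \<xi> = sqrt (infsum (\<lambda>x. (cmod (\<xi> x))\<^sup>2) UNIV)"

definition l2_inner :: "('a \<Rightarrow> complex) \<Rightarrow> ('a \<Rightarrow> complex) \<Rightarrow> complex" where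
  "l2_inner \<xi> \<eta> = infsum (\<lambda>x. \<xi> x * cnj (\<eta> x)) UNIV"

definition delta :: "'a \<Rightarrow> ('a \<Rightarrow> complex)" where
  "delta x = (\<lambda>y. if y = x then 1 else 0)"

definition c00 :: "('a \<Rightarrow> complex) set" where
  "c00 = {\<xi>. finite {x. \<xi> x \<noteq> 0}}"

definition l2_has_sum :: "('a \<Rightarrow> ('b \<Rightarrow> complex)) \<Rightarrow> ('b \<Rightarrow> complex) \<Rightarrow> bool" where
  "l2_has_sum v s \<longleftrightarrow>
     (\<forall>e>0. \<exists>F. finite F \<and>
        (\<forall>G. finite G \<and> F \<subseteq> G \<longrightarrow> l2_norm (s - (\<Sum>x\<in>G. v x)) < e))"

definition closed_operator :: "('a \<Rightarrow> complex) set \<Rightarrow> (('a \<Rightarrow> complex) \<Rightarrow> ('a \<Rightarrow> complex)) \<Rightarrow> bool" where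
  "closed_operator D h \<longleftrightarrow>
     D \<subseteq> l2 \<and> h ` D \<subseteq> l2 \<and>
     0 \<in> D \<and> (\<forall>\<xi>\<in>D. \<forall>\<eta>\<in>D. \<xi> + \<eta> \<in> D) \<and> (\<forall>c. \<forall>\<xi>\<in>D. (\<lambda>x. c * \<xi> x) \<in> D) \<and>
     (\<forall>\<xi>\<in>D. \<forall>\<eta>\<in>D. h (\<xi> + \<eta>) = h \<xi> + h \<eta>) \<and>
     (\<forall>c. \<forall>\<xi>\<in>D. h (\<lambda>x. c * \<xi> x) = (\<lambda>x. c * h \<xi> x)) \<and>
     (\<forall>\<xi>\<in>l2. \<forall>e>0. \<exists>\<eta>\<in>D. l2_norm (\<xi> - \<eta>) < e) \<and>
     (\<forall>s \<xi> \<eta>. (\<forall>n. s n \<in> D) \<and> \<xi> \<in> l2 \<and> \<eta> \<in> l2 \<and>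
        ((\<lambda>n. l2_norm (s n - \<xi>)) \<longlonglongrightarrow> 0) \<and>
        ((\<lambda>n. l2_norm (h (s n) - \<eta>)) \<longlonglongrightarrow> 0)
        \<longrightarrow> \<xi> \<in> D \<and> h \<xi> = \<eta>)"

definition partial_translation :: "'a::metric_space set \<Rightarrow> ('a \<Rightarrow> 'a) \<Rightarrow> bool" where
  "partial_translation A f \<longleftrightarrow> inj_on f A \<and> (\<exists>C. \<forall>x\<in>A. dist x (f x) \<le> C)"

text \<open>v_f delta_x = delta_(f x) for x in A, 0 otherwise\<close>
definition vf :: "'a set \<Rightarrow> ('a \<Rightarrow> 'a) \<Rightarrow> ('a \<Rightarrow> complex) \<Rightarrow> ('a \<Rightarrow> complex)" where
  "vf A f \<xi> = (\<lambda>y. if y \<in> f ` A then \<xi> (inv_into A f y) else 0)"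

definition coarse_operator :: "('a::metric_space \<Rightarrow> complex) set \<Rightarrow> (('a \<Rightarrow> complex) \<Rightarrow> ('a \<Rightarrow> complex)) \<Rightarrow> bool" where
  "coarse_operator D h \<longleftrightarrow> closed_operator D h \<and>
     (\<forall>A f. partial_translation A f \<longrightarrow>
        vf A f ` D \<subseteq> D \<and>
        (\<exists>C. \<forall>\<xi>\<in>D. l2_norm (h (vf A f \<xi>) - vf A f (h \<xi>)) \<le> C * l2_norm \<xi>))"

definition admissible :: "('a \<Rightarrow> complex) set \<Rightarrow> (('a \<Rightarrow> complex) \<Rightarrow> ('a \<Rightarrow> complex)) \<Rightarrow> bool" where
  "admissible D h \<longleftrightarrow> closed_operator D h \<and> c00 \<subseteq> D \<and>
     (\<forall>\<xi>\<in>D. l2_has_sum (\<lambda>y. (\<lambda>z. l2_inner \<xi> (delta y) * h (delta y) z)) (h \<xi>))"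

end

theory Submission
  imports Defs
begin

(* For A \<subseteq> X the projection P_A is v_f for the identity partial translation on A, so each
   commutator [h, P_A] is bounded. A gliding hump argument makes the bound uniform in A: otherwise
   finitely supported test vectors with "humps" A_k beyond everything chosen before would make
   [h, P_A] unbounded for A the union of all humps.
   Given a uniform bound K and a finite F, for every finite G \<supseteq> F
     h \<xi> - h (P_G \<xi>) = h (P_(X-G) \<xi>) = P_(X-G) h \<xi> - P_(X-G) h (P_F \<xi>) + [h, P_(X-G)] P_(X-F) \<xi>,
   two tails of fixed vectors plus a term of norm at most K \<parallel>P_(X-F) \<xi>\<parallel>, all small once F is
   large. Finally h (P_G \<xi>) = \<Sum>x\<in>G. \<xi> x h \<delta>_x, as \<delta>_x \<in> dom h by density. *)

section \<open>Square-summable functions\<close>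

definition proj :: "'a set \<Rightarrow> ('a \<Rightarrow> complex) \<Rightarrow> ('a \<Rightarrow> complex)" where
  "proj A v = (\<lambda>y. if y \<in> A then v y else 0)"

lemma l2_norm_nonneg: "0 \<le> l2_norm v"
  unfolding l2_norm_def by (simp add: infsum_nonneg)

lemma l2_norm_squared: "(l2_norm v)\<^sup>2 = infsum (\<lambda>x. (cmod (v x))\<^sup>2) UNIV"
  unfolding l2_norm_def by (simp add: infsum_nonneg)

lemma
  assumes "v \<in> l2"
  shows proj_in_l2: "proj A v \<in> l2"
    and l2_norm_proj_squared: "(l2_norm (proj A v))\<^sup>2 = infsum (\<lambda>x. (cmod (v x))\<^sup>2) A"
proof -
  have "(\<lambda>x. (cmod (v x))\<^sup>2) summable_on A"
    using assms unfolding l2_def mem_Collect_eq by (rule summable_on_subset) simp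
  moreover have "(\<lambda>x. (cmod (proj A v x))\<^sup>2) summable_on UNIV \<longleftrightarrow> (\<lambda>x. (cmod (v x))\<^sup>2) summable_on A"
    by (rule summable_on_cong_neutral) (auto simp: proj_def)
  ultimately show "proj A v \<in> l2"
    by (simp add: l2_def)
  have "infsum (\<lambda>x. (cmod (proj A v x))\<^sup>2) UNIV = infsum (\<lambda>x. (cmod (v x))\<^sup>2) A"
    by (rule infsum_cong_neutral) (auto simp: proj_def)
  then show "(l2_norm (proj A v))\<^sup>2 = infsum (\<lambda>x. (cmod (v x))\<^sup>2) A"
    by (simp add: l2_norm_squared)
qed

lemma
  assumes "finite U"
  shows proj_finite_in_l2: "proj U v \<in> l2"
    and l2_norm_proj_finite: "l2_norm (proj U v) = L2_set (\<lambda>y. cmod (v y)) U"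
proof -
  have "(\<lambda>x. (cmod (proj U v x))\<^sup>2) summable_on UNIV \<longleftrightarrow> (\<lambda>x. (cmod (v x))\<^sup>2) summable_on U"
    by (rule summable_on_cong_neutral) (auto simp: proj_def)
  with assms show "proj U v \<in> l2"
    by (simp add: l2_def)
  have "infsum (\<lambda>x. (cmod (proj U v x))\<^sup>2) UNIV = infsum (\<lambda>x. (cmod (v x))\<^sup>2) U"
    by (rule infsum_cong_neutral) (auto simp: proj_def)
  with assms show "l2_norm (proj U v) = L2_set (\<lambda>y. cmod (v y)) U"
    by (simp add: l2_norm_def L2_set_def)
qed

lemma L2_set_le_l2_norm:
  assumes "v \<in> l2"
  shows "L2_set (\<lambda>y. cmod (v y)) E \<le> l2_norm v"
proof (cases "finite E")
  case True
  have "(L2_set (\<lambda>y. cmod (v y)) E)\<^sup>2 = infsum (\<lambda>x. (cmod (v x))\<^sup>2) E"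
    using True by (simp add: L2_set_def sum_nonneg)
  also have "\<dots> \<le> infsum (\<lambda>x. (cmod (v x))\<^sup>2) UNIV"
    using assms True by (intro infsum_mono2) (auto simp: l2_def)
  also have "\<dots> = (l2_norm v)\<^sup>2"
    by (rule l2_norm_squared[symmetric])
  finally show ?thesis
    by (rule power2_le_imp_le[OF _ l2_norm_nonneg])
qed (simp add: l2_norm_nonneg)

lemma cmod_le_l2_norm: "v \<in> l2 \<Longrightarrow> cmod (v x) \<le> l2_norm v"
  using L2_set_le_l2_norm[of v "{x}"] by simp

lemma
  assumes "\<And>E. finite E \<Longrightarrow> L2_set (\<lambda>y. cmod (v y)) E \<le> B"
  shows in_l2_if_L2_set_bounded: "v \<in> l2"
    and l2_norm_le_if_L2_set_bounded: "l2_norm v \<le> B"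
proof -
  have sum_le: "(\<Sum>y\<in>E. (cmod (v y))\<^sup>2) \<le> B\<^sup>2" if "finite E" for E
  proof -
    have "(\<Sum>y\<in>E. (cmod (v y))\<^sup>2) = (L2_set (\<lambda>y. cmod (v y)) E)\<^sup>2"
      by (simp add: L2_set_def sum_nonneg)
    also have "\<dots> \<le> B\<^sup>2"
      using assms[OF that] by (simp add: power_mono)
    finally show ?thesis .
  qed
  have summable: "(\<lambda>x. (cmod (v x))\<^sup>2) summable_on UNIV"
    using sum_le by (intro nonneg_bdd_above_summable_on bdd_aboveI[where M = "B\<^sup>2"]) auto
  then show "v \<in> l2"
    by (simp add: l2_def)
  have "(l2_norm v)\<^sup>2 \<le> B\<^sup>2"
    unfolding l2_norm_squared using summable sum_le by (intro infsum_le_finite_sums) auto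
  moreover have "0 \<le> B"
    using assms[of "{}"] by simp
  ultimately show "l2_norm v \<le> B"
    by (rule power2_le_imp_le)
qed

lemma L2_set_cmod_triangle:
  assumes "\<And>y. y \<in> E \<Longrightarrow> cmod (w y) \<le> cmod (u y) + cmod (v y)"
  shows "L2_set (\<lambda>y. cmod (w y)) E \<le> L2_set (\<lambda>y. cmod (u y)) E + L2_set (\<lambda>y. cmod (v y)) E"
proof -
  have "L2_set (\<lambda>y. cmod (w y)) E \<le> L2_set (\<lambda>y. cmod (u y) + cmod (v y)) E"
    using assms by (intro L2_set_mono) auto
  also have "\<dots> \<le> L2_set (\<lambda>y. cmod (u y)) E + L2_set (\<lambda>y. cmod (v y)) E"
    by (rule L2_set_triangle_ineq)
  finally show ?thesis .
qed

lemma L2_set_subset_le: "finite U \<Longrightarrow> E \<subseteq> U \<Longrightarrow> L2_set f E \<le> L2_set f U"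
  unfolding L2_set_def by (intro real_sqrt_le_mono sum_mono2) auto

lemma
  assumes "u \<in> l2" "v \<in> l2" "\<And>y. cmod (w y) \<le> cmod (u y) + cmod (v y)"
  shows in_l2_if_pointwise_le: "w \<in> l2"
    and l2_norm_le_if_pointwise_le: "l2_norm w \<le> l2_norm u + l2_norm v"
proof -
  have "L2_set (\<lambda>y. cmod (w y)) E \<le> l2_norm u + l2_norm v" for E
  proof -
    have "L2_set (\<lambda>y. cmod (w y)) E \<le> L2_set (\<lambda>y. cmod (u y)) E + L2_set (\<lambda>y. cmod (v y)) E"
      using assms(3) by (rule L2_set_cmod_triangle)
    also have "\<dots> \<le> l2_norm u + l2_norm v"
      using assms(1,2) by (intro add_mono L2_set_le_l2_norm)
    finally show ?thesis .
  qed
  then show "w \<in> l2" "l2_norm w \<le> l2_norm u + l2_norm v"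
    by (rule in_l2_if_L2_set_bounded, rule l2_norm_le_if_L2_set_bounded)
qed

lemma l2_norm_add_le:
  assumes "u \<in> l2" "v \<in> l2"
  shows "l2_norm (u + v) \<le> l2_norm u + l2_norm v"
  using l2_norm_le_if_pointwise_le[OF assms] by (simp add: norm_triangle_ineq)

lemma
  assumes "u \<in> l2" "v \<in> l2"
  shows l2_diff_closed: "u - v \<in> l2"
    and l2_norm_diff_le: "l2_norm (u - v) \<le> l2_norm u + l2_norm v"
  using in_l2_if_pointwise_le[OF assms] l2_norm_le_if_pointwise_le[OF assms]
  by (simp_all add: norm_triangle_ineq4)

lemma l2_tail:
  assumes "v \<in> l2" "0 < e"
  obtains F where "finite F" "\<And>R. R \<inter> F = {} \<Longrightarrow> l2_norm (proj R v) < e"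
proof -
  let ?f = "\<lambda>x. (cmod (v x))\<^sup>2"
  have summable: "?f summable_on A" for A
    using assms(1) unfolding l2_def mem_Collect_eq by (rule summable_on_subset) simp
  obtain F where F: "finite F" "dist (sum ?f F) (infsum ?f UNIV) \<le> e\<^sup>2 / 2"
    using infsum_finite_approximation[OF summable, of "e\<^sup>2 / 2" UNIV] assms(2) by auto
  have "l2_norm (proj R v) < e" if "R \<inter> F = {}" for R
  proof -
    have "(l2_norm (proj R v))\<^sup>2 = infsum ?f R"
      by (rule l2_norm_proj_squared[OF assms(1)])
    also have "\<dots> \<le> infsum ?f (UNIV - F)"
      using that by (intro infsum_mono2 summable) auto
    also have "\<dots> = infsum ?f UNIV - sum ?f F"
      using F(1) summable by (simp add: infsum_Diff)
    also have "\<dots> \<le> e\<^sup>2 / 2"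
      using F(2) unfolding dist_real_def abs_le_iff by linarith
    also have "\<dots> < e\<^sup>2"
      using assms(2) by simp
    finally show ?thesis
      using assms(2) by (simp add: power_less_imp_less_base)
  qed
  with F(1) show ?thesis
    by (rule that)
qed

section \<open>A gliding hump argument\<close>

lemma UN_Int_eq_if_stable:
  assumes "\<And>n. S n \<subseteq> W n" "\<And>n. W n \<subseteq> W (Suc n)" "\<And>n. S (Suc n) \<inter> W n = S n"
  shows "(\<Union>n. S n) \<inter> W k = S k"
proof
  have "S n \<subseteq> S (Suc n)" for n
    using assms(3)[of n] by blast
  then have S_mono: "S j \<subseteq> S n" if "j \<le> n" for j n
    using that by (rule lift_Suc_mono_le)
  have stable: "S n \<inter> W k = S k" if "k \<le> n" for n
    using that
  proof (induction rule: dec_induct)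
    case base
    show ?case using assms(1) by blast
  next
    case (step n)
    have "W k \<subseteq> W n"
      using assms(2) step.hyps(1) by (rule lift_Suc_mono_le)
    then show ?case
      using step.IH assms(3)[of n] by blast
  qed
  show "(\<Union>n. S n) \<inter> W k \<subseteq> S k"
  proof
    fix x
    assume "x \<in> (\<Union>n. S n) \<inter> W k"
    then obtain n where "x \<in> S n" "x \<in> W k"
      by blast
    then show "x \<in> S k"
      using stable[of n] S_mono[of n k] by (cases "k \<le> n") auto
  qed
qed (use assms(1) in blast)

(* q A u is the size of the test object u under an operator indexed by the set A, such as the
   norm of [h, P_A] v on a finite set U for u = (U, v); w u is the size of u itself. *)
locale gliding_hump =
  fixes V :: "'u set" and supp :: "'u \<Rightarrow> 'a set"
    and q :: "'a set \<Rightarrow> 'u \<Rightarrow> real" and w :: "'u \<Rightarrow> real"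
  assumes finite_supp: "u \<in> V \<Longrightarrow> finite (supp u)"
    and depends_on_supp: "u \<in> V \<Longrightarrow> q A u = q (A \<inter> supp u) u"
    and union_le: "u \<in> V \<Longrightarrow> A \<inter> B = {} \<Longrightarrow> q (A \<union> B) u \<le> q A u + q B u"
    and le_union: "u \<in> V \<Longrightarrow> A \<inter> B = {} \<Longrightarrow> q A u \<le> q (A \<union> B) u + q B u"
    and weight_nonneg: "u \<in> V \<Longrightarrow> 0 \<le> w u"
    and bounded: "\<exists>C. \<forall>u\<in>V. q A u \<le> C * w u"
begin

lemma bounded_on_Pow:
  assumes "finite W"
  obtains M where "\<And>B u. B \<subseteq> W \<Longrightarrow> u \<in> V \<Longrightarrow> q B u \<le> M * w u"
proof -
  obtain C where C: "\<And>B u. u \<in> V \<Longrightarrow> q B u \<le> C B * w u"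
    using bounded by metis
  have "q B u \<le> Max (C ` Pow W) * w u" if "B \<subseteq> W" "u \<in> V" for B u
  proof -
    have "C B \<le> Max (C ` Pow W)"
      using assms that by simp
    then show ?thesis
      using C[OF that(2)] weight_nonneg[OF that(2)] by (meson mult_right_mono order_trans)
  qed
  then show ?thesis
    by (rule that)
qed

lemma unbounded_outside_finite:
  assumes unbounded: "\<And>K. \<exists>A. \<exists>u\<in>V. K * w u < q A u" and "finite W"
  shows "\<exists>A. \<exists>u\<in>V. A \<subseteq> supp u \<and> A \<inter> W = {} \<and> K * w u < q A u"
proof -
  obtain M where M: "\<And>B u. B \<subseteq> W \<Longrightarrow> u \<in> V \<Longrightarrow> q B u \<le> M * w u"
    using bounded_on_Pow[OF \<open>finite W\<close>] by blast
  obtain A u where u: "u \<in> V" and big: "(M + K) * w u < q A u"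
    using unbounded by blast
  define A' where "A' = A \<inter> supp u - W"
  have "q A u = q (A \<inter> supp u \<inter> W \<union> A') u"
    using depends_on_supp[OF u] by (metis A'_def Int_Diff_Un)
  also have "\<dots> \<le> q (A \<inter> supp u \<inter> W) u + q A' u"
    using u by (rule union_le) (auto simp: A'_def)
  finally have "K * w u < q A' u"
    using big M[of "A \<inter> supp u \<inter> W" u] u by (simp add: algebra_simps)
  moreover have "A' \<subseteq> supp u" "A' \<inter> W = {}"
    by (auto simp: A'_def)
  ultimately show ?thesis
    using u by blast
qed

lemma hump_sequence:
  assumes unbounded: "\<And>K. \<exists>A. \<exists>u\<in>V. K * w u < q A u"
  obtains S W :: "nat \<Rightarrow> 'a set"
  where "\<And>n. S n \<subseteq> W n" "\<And>n. W n \<subseteq> W (Suc n)"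
    and "\<And>n. \<exists>A. \<exists>u\<in>V. \<exists>C. A \<subseteq> supp u \<and> A \<inter> W n = {} \<and> (\<forall>v\<in>V. q (S n) v \<le> C * w v) \<and>
      (C + real n) * w u < q A u \<and> S (Suc n) = S n \<union> A \<and> W (Suc n) = W n \<union> supp u"
proof -
  define step where "step n SW SW' \<longleftrightarrow> (\<exists>A. \<exists>u\<in>V. \<exists>C. A \<subseteq> supp u \<and> A \<inter> snd SW = {} \<and>
      (\<forall>v\<in>V. q (fst SW) v \<le> C * w v) \<and> (C + real n) * w u < q A u \<and>
      SW' = (fst SW \<union> A, snd SW \<union> supp u))" for n SW SW'
  have "\<exists>f. \<forall>n. (finite (snd (f n)) \<and> fst (f n) \<subseteq> snd (f n)) \<and> step n (f n) (f (Suc n))"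
  proof (rule dependent_nat_choice)
    fix SW :: "'a set \<times> 'a set" and n
    assume SW: "finite (snd SW) \<and> fst SW \<subseteq> snd SW"
    obtain C where C: "\<forall>v\<in>V. q (fst SW) v \<le> C * w v"
      using bounded by blast
    obtain A u where "u \<in> V" "A \<subseteq> supp u" "A \<inter> snd SW = {}" "(C + real n) * w u < q A u"
      using unbounded_outside_finite[OF unbounded, of "snd SW"] SW by blast
    then show "\<exists>SW'. (finite (snd SW') \<and> fst SW' \<subseteq> snd SW') \<and> step n SW SW'"
      using SW C finite_supp unfolding step_def
      by (intro exI[of _ "(fst SW \<union> A, snd SW \<union> supp u)"]) auto
  qed (rule exI[of _ "({}, {})"], simp)
  then obtain f where f: "\<And>n. fst (f n) \<subseteq> snd (f n)" "\<And>n. step n (f n) (f (Suc n))"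
    by blast
  show ?thesis
  proof (rule that[of "\<lambda>n. fst (f n)" "\<lambda>n. snd (f n)"])
    show "fst (f n) \<subseteq> snd (f n)" for n
      by (rule f(1))
    show "snd (f n) \<subseteq> snd (f (Suc n))" for n
      using f(2)[of n] unfolding step_def by auto
    show "\<exists>A. \<exists>u\<in>V. \<exists>C. A \<subseteq> supp u \<and> A \<inter> snd (f n) = {} \<and>
        (\<forall>v\<in>V. q (fst (f n)) v \<le> C * w v) \<and> (C + real n) * w u < q A u \<and>
        fst (f (Suc n)) = fst (f n) \<union> A \<and> snd (f (Suc n)) = snd (f n) \<union> supp u" for n
      using f(2)[of n] unfolding step_def by (metis fst_conv snd_conv)
  qed
qed

lemma uniformly_bounded: "\<exists>K. \<forall>A. \<forall>u\<in>V. q A u \<le> K * w u"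
proof (rule ccontr)
  assume "\<not> ?thesis"
  then have "\<And>K. \<exists>A. \<exists>u\<in>V. K * w u < q A u"
    by (meson not_le)
  then show False
  proof (rule hump_sequence)
    fix S W :: "nat \<Rightarrow> 'a set"
    assume SW: "\<And>n. S n \<subseteq> W n" "\<And>n. W n \<subseteq> W (Suc n)"
      and hump: "\<And>n. \<exists>A. \<exists>u\<in>V. \<exists>C. A \<subseteq> supp u \<and> A \<inter> W n = {} \<and> (\<forall>v\<in>V. q (S n) v \<le> C * w v) \<and>
        (C + real n) * w u < q A u \<and> S (Suc n) = S n \<union> A \<and> W (Suc n) = W n \<union> supp u"
    obtain C_union where C_union: "\<And>u. u \<in> V \<Longrightarrow> q (\<Union>n. S n) u \<le> C_union * w u"
      using bounded by blast
    define k where "k = nat \<lceil>C_union\<rceil>"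
    have k: "C_union \<le> real k"
      unfolding k_def by (rule real_nat_ceiling_ge)
    obtain A u C where u: "u \<in> V" and A: "A \<subseteq> supp u" "A \<inter> W k = {}"
      and C: "\<forall>v\<in>V. q (S k) v \<le> C * w v" and big: "(C + real k) * w u < q A u"
      and S_Suc: "S (Suc k) = S k \<union> A" and W_Suc: "W (Suc k) = W k \<union> supp u"
      using hump[of k] by blast
    (* Later humps avoid supp u \<subseteq> W (Suc k), so on supp u the union of all S n is S k \<union> A. *)
    have "(\<Union>n. S n) \<inter> W (Suc k) = S (Suc k)"
    proof (rule UN_Int_eq_if_stable[of S W, OF SW])
      show "S (Suc n) \<inter> W n = S n" for n
        using hump[of n] SW(1)[of n] by auto
    qed
    then have union_on_supp: "(\<Union>n. S n) \<inter> supp u = A \<union> S k \<inter> supp u"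
      using S_Suc W_Suc A(1) by blast
    have "q A u \<le> q (A \<union> S k \<inter> supp u) u + q (S k \<inter> supp u) u"
      using u SW(1)[of k] A(2) by (intro le_union) auto
    also have "\<dots> = q (\<Union>n. S n) u + q (S k) u"
      using depends_on_supp[OF u] union_on_supp by metis
    also have "\<dots> \<le> real k * w u + C * w u"
      using C_union[OF u] bspec[OF C u] mult_right_mono[OF k weight_nonneg[OF u]] by linarith
    finally show False
      using big by (simp add: algebra_simps)
  qed
qed

end

section \<open>Coarse operators\<close>

lemma l2_inner_delta: "l2_inner \<xi> (delta x) = \<xi> x"
proof -
  have "infsum (\<lambda>y. \<xi> y * cnj (delta x y)) UNIV = infsum (\<lambda>y. \<xi> y * cnj (delta x y)) {x}"
    by (rule infsum_cong_neutral) (auto simp: delta_def)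
  then show ?thesis
    by (simp add: l2_inner_def delta_def)
qed

lemma delta_in_l2: "delta x \<in> l2"
proof -
  have "delta x = proj {x} (\<lambda>_. 1)"
    by (auto simp: delta_def proj_def)
  then show ?thesis
    by (simp add: proj_finite_in_l2)
qed

lemma partial_translation_id: "partial_translation A id"
  unfolding partial_translation_def by (auto intro: exI[of _ 0])

lemma vf_id: "vf A id = proj A"
  by (auto simp: vf_def proj_def fun_eq_iff inv_into_f_f[OF inj_on_id])

locale coarse =
  fixes D :: "('a::metric_space \<Rightarrow> complex) set"
    and h :: "('a \<Rightarrow> complex) \<Rightarrow> ('a \<Rightarrow> complex)"
  assumes coarse_operator: "coarse_operator D h"
begin

lemma closed_operator: "closed_operator D h"
  using coarse_operator by (simp add: coarse_operator_def)

lemma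
  shows dom_subset_l2: "\<xi> \<in> D \<Longrightarrow> \<xi> \<in> l2"
    and h_in_l2: "\<xi> \<in> D \<Longrightarrow> h \<xi> \<in> l2"
    and zero_in_dom: "0 \<in> D"
    and add_in_dom: "\<xi> \<in> D \<Longrightarrow> \<eta> \<in> D \<Longrightarrow> \<xi> + \<eta> \<in> D"
    and scale_in_dom: "\<xi> \<in> D \<Longrightarrow> (\<lambda>x. c * \<xi> x) \<in> D"
    and h_add: "\<xi> \<in> D \<Longrightarrow> \<eta> \<in> D \<Longrightarrow> h (\<xi> + \<eta>) = h \<xi> + h \<eta>"
    and h_scale: "\<xi> \<in> D \<Longrightarrow> h (\<lambda>x. c * \<xi> x) = (\<lambda>x. c * h \<xi> x)"
    and dom_dense: "v \<in> l2 \<Longrightarrow> 0 < e \<Longrightarrow> \<exists>\<eta>\<in>D. l2_norm (v - \<eta>) < e"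
  using closed_operator unfolding closed_operator_def by (elim conjE; blast)+

lemma h_zero: "h 0 = 0"
  using h_add[OF zero_in_dom zero_in_dom] by simp

lemma
  assumes "partial_translation A f"
  shows vf_in_dom: "\<xi> \<in> D \<Longrightarrow> vf A f \<xi> \<in> D"
    and vf_commutator_bounded: "\<exists>C. \<forall>\<xi>\<in>D. l2_norm (h (vf A f \<xi>) - vf A f (h \<xi>)) \<le> C * l2_norm \<xi>"
  using coarse_operator assms unfolding coarse_operator_def by blast+

lemma proj_in_dom: "\<xi> \<in> D \<Longrightarrow> proj A \<xi> \<in> D"
  using vf_in_dom[OF partial_translation_id] by (simp add: vf_id)

definition commutator :: "'a set \<Rightarrow> ('a \<Rightarrow> complex) \<Rightarrow> ('a \<Rightarrow> complex)" where
  "commutator A \<xi> = h (proj A \<xi>) - proj A (h \<xi>)"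

lemma commutator_bounded: "\<exists>C. \<forall>\<xi>\<in>D. l2_norm (commutator A \<xi>) \<le> C * l2_norm \<xi>"
  using vf_commutator_bounded[OF partial_translation_id] by (simp add: vf_id commutator_def)

lemma commutator_in_l2: "\<xi> \<in> D \<Longrightarrow> commutator A \<xi> \<in> l2"
  unfolding commutator_def by (intro l2_diff_closed h_in_l2 proj_in_dom proj_in_l2)

lemma commutator_add:
  "\<xi> \<in> D \<Longrightarrow> \<eta> \<in> D \<Longrightarrow> commutator A (\<xi> + \<eta>) = commutator A \<xi> + commutator A \<eta>"
proof -
  assume "\<xi> \<in> D" "\<eta> \<in> D"
  moreover have "proj A (\<xi> + \<eta>) = proj A \<xi> + proj A \<eta>" for \<xi> \<eta>
    by (auto simp: proj_def)
  ultimately show ?thesis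
    by (simp add: commutator_def h_add proj_in_dom)
qed

lemma commutator_union:
  assumes "A \<inter> B = {}" "\<xi> \<in> D"
  shows "commutator (A \<union> B) \<xi> = commutator A \<xi> + commutator B \<xi>"
proof -
  have "proj (A \<union> B) v = proj A v + proj B v" for v
    using assms(1) by (auto simp: proj_def fun_eq_iff)
  then show ?thesis
    using assms(2) by (simp add: commutator_def h_add proj_in_dom)
qed

lemma commutator_local:
  "y \<in> U \<Longrightarrow> commutator A (proj U v) y = commutator (A \<inter> U) (proj U v) y"
proof -
  assume "y \<in> U"
  moreover have "proj A (proj U v) = proj (A \<inter> U) (proj U v)"
    by (auto simp: proj_def)
  ultimately show ?thesis
    by (simp add: commutator_def proj_def)
qed

lemma delta_in_dom: "delta x \<in> D"
proof -
  obtain \<eta> where \<eta>: "\<eta> \<in> D" "l2_norm (delta x - \<eta>) < 1"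
    using dom_dense[OF delta_in_l2, of 1] by auto
  have "delta x - \<eta> \<in> l2"
    using delta_in_l2 dom_subset_l2[OF \<eta>(1)] by (rule l2_diff_closed)
  then have "cmod (1 - \<eta> x) < 1"
    using cmod_le_l2_norm[of "delta x - \<eta>" x] \<eta>(2) by (simp add: delta_def)
  then have "\<eta> x \<noteq> 0"
    by auto
  then have "delta x = (\<lambda>z. (1 / \<eta> x) * proj {x} \<eta> z)"
    by (auto simp: proj_def delta_def)
  then show ?thesis
    using scale_in_dom[OF proj_in_dom[OF \<eta>(1)]] by metis
qed

lemma
  assumes "finite G"
  shows proj_finite_in_dom: "proj G \<xi> \<in> D"
    and h_proj_finite: "h (proj G \<xi>) = (\<Sum>x\<in>G. (\<lambda>z. \<xi> x * h (delta x) z))"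
proof -
  have "proj G \<xi> \<in> D \<and> h (proj G \<xi>) = (\<Sum>x\<in>G. (\<lambda>z. \<xi> x * h (delta x) z))"
    using assms
  proof (induction G rule: finite_induct)
    case empty
    have "proj {} \<xi> = 0"
      by (simp add: proj_def fun_eq_iff)
    then show ?case
      using zero_in_dom h_zero by (metis sum.empty)
  next
    case (insert x G)
    have split: "proj (insert x G) \<xi> = proj G \<xi> + (\<lambda>z. \<xi> x * delta x z)"
      using insert.hyps(2) by (auto simp: proj_def delta_def fun_eq_iff)
    have x_part: "(\<lambda>z. \<xi> x * delta x z) \<in> D"
      by (rule scale_in_dom[OF delta_in_dom])
    from insert.IH have G_part: "proj G \<xi> \<in> D"
      and h_G_part: "h (proj G \<xi>) = (\<Sum>x\<in>G. (\<lambda>z. \<xi> x * h (delta x) z))"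
      by blast+
    have "h (proj (insert x G) \<xi>) = h (proj G \<xi>) + (\<lambda>z. \<xi> x * h (delta x) z)"
      unfolding split by (simp only: h_add[OF G_part x_part] h_scale[OF delta_in_dom])
    then show ?case
      unfolding sum.insert[OF insert.hyps] h_G_part split
      using add_in_dom[OF G_part x_part] by (simp only: add.commute)
  qed
  then show "proj G \<xi> \<in> D" "h (proj G \<xi>) = (\<Sum>x\<in>G. (\<lambda>z. \<xi> x * h (delta x) z))"
    by auto
qed

lemma c00_subset_dom: "c00 \<subseteq> D"
proof
  fix \<xi> :: "'a \<Rightarrow> complex"
  assume "\<xi> \<in> c00"
  then have "finite {x. \<xi> x \<noteq> 0}" and "proj {x. \<xi> x \<noteq> 0} \<xi> = \<xi>"
    by (auto simp: c00_def proj_def)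
  then show "\<xi> \<in> D"
    by (metis proj_finite_in_dom)
qed

lemma gliding_hump_commutator:
  "gliding_hump {u. finite (fst u)} fst
    (\<lambda>A u. L2_set (\<lambda>y. cmod (commutator A (proj (fst u) (snd u)) y)) (fst u))
    (\<lambda>u. L2_set (\<lambda>y. cmod (snd u y)) (fst u))"
proof unfold_locales
  fix A B :: "'a set" and u :: "'a set \<times> ('a \<Rightarrow> complex)"
  assume u: "u \<in> {u. finite (fst u)}"
  then have dom: "proj (fst u) (snd u) \<in> D"
    by (simp add: proj_finite_in_dom)
  show "finite (fst u)"
    using u by simp
  show "0 \<le> L2_set (\<lambda>y. cmod (snd u y)) (fst u)"
    by simp
  show "L2_set (\<lambda>y. cmod (commutator A (proj (fst u) (snd u)) y)) (fst u) =
      L2_set (\<lambda>y. cmod (commutator (A \<inter> fst u) (proj (fst u) (snd u)) y)) (fst u)"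
    by (intro L2_set_cong refl arg_cong[where f = cmod] commutator_local)
  assume AB: "A \<inter> B = {}"
  show "L2_set (\<lambda>y. cmod (commutator (A \<union> B) (proj (fst u) (snd u)) y)) (fst u) \<le>
      L2_set (\<lambda>y. cmod (commutator A (proj (fst u) (snd u)) y)) (fst u) +
      L2_set (\<lambda>y. cmod (commutator B (proj (fst u) (snd u)) y)) (fst u)"
    unfolding commutator_union[OF AB dom]
    by (rule L2_set_cmod_triangle) (simp add: norm_triangle_ineq)
  show "L2_set (\<lambda>y. cmod (commutator A (proj (fst u) (snd u)) y)) (fst u) \<le>
      L2_set (\<lambda>y. cmod (commutator (A \<union> B) (proj (fst u) (snd u)) y)) (fst u) +
      L2_set (\<lambda>y. cmod (commutator B (proj (fst u) (snd u)) y)) (fst u)"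
    unfolding commutator_union[OF AB dom]
    by (rule L2_set_cmod_triangle) (metis plus_fun_apply add_diff_cancel_right' norm_triangle_ineq4)
next
  fix A :: "'a set"
  obtain C where C: "\<And>\<xi>. \<xi> \<in> D \<Longrightarrow> l2_norm (commutator A \<xi>) \<le> C * l2_norm \<xi>"
    using commutator_bounded by blast
  have "L2_set (\<lambda>y. cmod (commutator A (proj U v) y)) U \<le> C * L2_set (\<lambda>y. cmod (v y)) U"
    if "finite U" for U v
  proof -
    have dom: "proj U v \<in> D"
      using that by (rule proj_finite_in_dom)
    have "L2_set (\<lambda>y. cmod (commutator A (proj U v) y)) U \<le> l2_norm (commutator A (proj U v))"
      by (rule L2_set_le_l2_norm[OF commutator_in_l2[OF dom]])
    also have "\<dots> \<le> C * l2_norm (proj U v)"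
      by (rule C[OF dom])
    finally show ?thesis
      by (simp add: l2_norm_proj_finite[OF that])
  qed
  then show "\<exists>C. \<forall>u\<in>{u. finite (fst u)}.
      L2_set (\<lambda>y. cmod (commutator A (proj (fst u) (snd u)) y)) (fst u) \<le>
      C * L2_set (\<lambda>y. cmod (snd u y)) (fst u)"
    by blast
qed

lemma commutator_bound_on_finite:
  obtains K where "0 \<le> K" and "\<And>A U v. finite U \<Longrightarrow>
    L2_set (\<lambda>y. cmod (commutator A (proj U v) y)) U \<le> K * L2_set (\<lambda>y. cmod (v y)) U"
proof -
  interpret gliding_hump "{u. finite (fst u)}" fst
    "\<lambda>A u. L2_set (\<lambda>y. cmod (commutator A (proj (fst u) (snd u)) y)) (fst u)"
    "\<lambda>u. L2_set (\<lambda>y. cmod (snd u y)) (fst u)"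
    by (rule gliding_hump_commutator)
  obtain K where "\<forall>A. \<forall>u\<in>{u. finite (fst u)}.
      L2_set (\<lambda>y. cmod (commutator A (proj (fst u) (snd u)) y)) (fst u) \<le>
      K * L2_set (\<lambda>y. cmod (snd u y)) (fst u)"
    using uniformly_bounded by blast
  then have K: "L2_set (\<lambda>y. cmod (commutator A (proj U v) y)) U \<le> K * L2_set (\<lambda>y. cmod (v y)) U"
    if "finite U" for A U v
    using that by (metis fst_conv mem_Collect_eq snd_conv)
  show ?thesis
  proof (rule that[of "max K 0"])
    fix A U :: "'a set" and v :: "'a \<Rightarrow> complex"
    assume "finite U"
    then show "L2_set (\<lambda>y. cmod (commutator A (proj U v) y)) U \<le> max K 0 * L2_set (\<lambda>y. cmod (v y)) U"
      using K[of U A v] mult_right_mono[of K "max K 0" "L2_set (\<lambda>y. cmod (v y)) U"] by simp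
  qed simp
qed

lemma L2_set_commutator_le:
  assumes K: "0 \<le> K" "L2_set (\<lambda>y. cmod (commutator A (proj U \<xi>) y)) U \<le> K * L2_set (\<lambda>y. cmod (\<xi> y)) U"
    and C: "\<And>\<eta>. \<eta> \<in> D \<Longrightarrow> l2_norm (commutator A \<eta>) \<le> C * l2_norm \<eta>"
    and \<xi>: "\<xi> \<in> D" and "finite U" "E \<subseteq> U"
  shows "L2_set (\<lambda>y. cmod (commutator A \<xi> y)) E \<le> K * l2_norm \<xi> + C * l2_norm (proj (- U) \<xi>)"
proof -
  have "\<xi> = proj U \<xi> + proj (- U) \<xi>"
    by (auto simp: proj_def fun_eq_iff)
  then have split: "commutator A \<xi> = commutator A (proj U \<xi>) + commutator A (proj (- U) \<xi>)"
    by (metis commutator_add proj_in_dom[OF \<xi>])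
  have "L2_set (\<lambda>y. cmod (commutator A (proj U \<xi>) y)) E \<le>
      L2_set (\<lambda>y. cmod (commutator A (proj U \<xi>) y)) U"
    using \<open>finite U\<close> \<open>E \<subseteq> U\<close> by (rule L2_set_subset_le)
  also have "\<dots> \<le> K * l2_norm \<xi>"
    using K(2) mult_left_mono[OF L2_set_le_l2_norm[OF dom_subset_l2[OF \<xi>], of U] K(1)] by linarith
  finally have inside: "L2_set (\<lambda>y. cmod (commutator A (proj U \<xi>) y)) E \<le> K * l2_norm \<xi>" .
  have "L2_set (\<lambda>y. cmod (commutator A (proj (- U) \<xi>) y)) E \<le> l2_norm (commutator A (proj (- U) \<xi>))"
    by (intro L2_set_le_l2_norm commutator_in_l2 proj_in_dom \<xi>)
  also have "\<dots> \<le> C * l2_norm (proj (- U) \<xi>)"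
    by (intro C proj_in_dom \<xi>)
  finally have outside: "L2_set (\<lambda>y. cmod (commutator A (proj (- U) \<xi>) y)) E \<le> C * l2_norm (proj (- U) \<xi>)" .
  have "L2_set (\<lambda>y. cmod (commutator A \<xi> y)) E \<le>
      L2_set (\<lambda>y. cmod (commutator A (proj U \<xi>) y)) E +
      L2_set (\<lambda>y. cmod (commutator A (proj (- U) \<xi>) y)) E"
    unfolding split by (rule L2_set_cmod_triangle) (simp add: norm_triangle_ineq)
  with inside outside show ?thesis
    by linarith
qed

lemma commutator_uniform_bound:
  obtains K where "0 \<le> K" and "\<And>A \<xi>. \<xi> \<in> D \<Longrightarrow> l2_norm (commutator A \<xi>) \<le> K * l2_norm \<xi>"
proof -
  obtain K where K: "0 \<le> K" "\<And>A U v. finite U \<Longrightarrow>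
      L2_set (\<lambda>y. cmod (commutator A (proj U v) y)) U \<le> K * L2_set (\<lambda>y. cmod (v y)) U"
    using commutator_bound_on_finite by blast
  have "l2_norm (commutator A \<xi>) \<le> K * l2_norm \<xi>" if \<xi>: "\<xi> \<in> D" for A \<xi>
  proof (rule l2_norm_le_if_L2_set_bounded)
    fix E :: "'a set"
    assume "finite E"
    obtain C where C: "\<And>\<eta>. \<eta> \<in> D \<Longrightarrow> l2_norm (commutator A \<eta>) \<le> C * l2_norm \<eta>"
      using commutator_bounded by blast
    show "L2_set (\<lambda>y. cmod (commutator A \<xi> y)) E \<le> K * l2_norm \<xi>"
    proof (rule field_le_epsilon)
      fix d :: real
      assume "0 < d"
      then have "0 < d / (\<bar>C\<bar> + 1)"
        by simp
      then obtain F where F: "finite F" "\<And>R. R \<inter> F = {} \<Longrightarrow> l2_norm (proj R \<xi>) < d / (\<bar>C\<bar> + 1)"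
        using l2_tail[OF dom_subset_l2[OF \<xi>]] by blast
      have "L2_set (\<lambda>y. cmod (commutator A \<xi> y)) E \<le>
          K * l2_norm \<xi> + C * l2_norm (proj (- (E \<union> F)) \<xi>)"
        using \<open>finite E\<close> F(1) by (intro L2_set_commutator_le K C \<xi>) auto
      also have "C * l2_norm (proj (- (E \<union> F)) \<xi>) \<le> \<bar>C\<bar> * (d / (\<bar>C\<bar> + 1))"
        using F(2)[of "- (E \<union> F)"] l2_norm_nonneg[of "proj (- (E \<union> F)) \<xi>"]
        by (intro mult_mono abs_ge_self) auto
      also have "\<bar>C\<bar> * (d / (\<bar>C\<bar> + 1)) \<le> d"
        using \<open>0 < d\<close> by (simp add: field_simps)
      finally show "L2_set (\<lambda>y. cmod (commutator A \<xi> y)) E \<le> K * l2_norm \<xi> + d"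
        by simp
    qed
  qed
  then show ?thesis
    using that[OF K(1)] by blast
qed

lemma h_proj_decomposition:
  assumes "\<xi> \<in> D" "R \<inter> F = {}"
  shows "h (proj R \<xi>) = (proj R (h \<xi>) - proj R (h (proj F \<xi>))) + commutator R (proj (- F) \<xi>)"
proof -
  have "\<xi> = proj F \<xi> + proj (- F) \<xi>"
    by (auto simp: proj_def fun_eq_iff)
  then have "h \<xi> = h (proj F \<xi>) + h (proj (- F) \<xi>)"
    by (metis h_add proj_in_dom[OF assms(1)])
  moreover have "proj R (proj (- F) \<xi>) = proj R \<xi>"
    using assms(2) by (auto simp: proj_def fun_eq_iff)
  ultimately show ?thesis
    by (auto simp: commutator_def proj_def fun_eq_iff)
qed

lemma l2_norm_h_proj_le:
  assumes \<xi>: "\<xi> \<in> D" and "R \<inter> F = {}"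
  shows "l2_norm (h (proj R \<xi>)) \<le> l2_norm (proj R (h \<xi>)) +
    l2_norm (proj R (h (proj F \<xi>))) + l2_norm (commutator R (proj (- F) \<xi>))"
proof -
  have "l2_norm (h (proj R \<xi>)) \<le> l2_norm (proj R (h \<xi>) - proj R (h (proj F \<xi>))) +
      l2_norm (commutator R (proj (- F) \<xi>))"
    unfolding h_proj_decomposition[OF assms]
    by (intro l2_norm_add_le l2_diff_closed proj_in_l2 h_in_l2 commutator_in_l2 proj_in_dom \<xi>)
  moreover have "l2_norm (proj R (h \<xi>) - proj R (h (proj F \<xi>))) \<le>
      l2_norm (proj R (h \<xi>)) + l2_norm (proj R (h (proj F \<xi>)))"
    by (intro l2_norm_diff_le proj_in_l2 h_in_l2 proj_in_dom \<xi>)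
  ultimately show ?thesis
    by linarith
qed

lemma h_proj_tail:
  assumes \<xi>: "\<xi> \<in> D" and "0 < e"
  obtains F where "finite F" and "\<And>R. R \<inter> F = {} \<Longrightarrow> l2_norm (h (proj R \<xi>)) < e"
proof -
  obtain K where K: "0 \<le> K" "\<And>A \<eta>. \<eta> \<in> D \<Longrightarrow> l2_norm (commutator A \<eta>) \<le> K * l2_norm \<eta>"
    using commutator_uniform_bound by blast
  have "0 < e / (3 * (K + 1))" "0 < e / 3"
    using \<open>0 < e\<close> K(1) by simp_all
  then obtain F0 where F0: "finite F0" "\<And>R. R \<inter> F0 = {} \<Longrightarrow> l2_norm (proj R \<xi>) < e / (3 * (K + 1))"
    using l2_tail[OF dom_subset_l2[OF \<xi>]] by blast
  have head: "proj F0 \<xi> \<in> D" and rest: "proj (- F0) \<xi> \<in> D"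
    using \<xi> by (simp_all add: proj_in_dom)
  obtain F1 where F1: "finite F1" "\<And>R. R \<inter> F1 = {} \<Longrightarrow> l2_norm (proj R (h \<xi>)) < e / 3"
    using l2_tail[OF h_in_l2[OF \<xi>] \<open>0 < e / 3\<close>] by blast
  obtain F2 where F2: "finite F2" "\<And>R. R \<inter> F2 = {} \<Longrightarrow> l2_norm (proj R (h (proj F0 \<xi>))) < e / 3"
    using l2_tail[OF h_in_l2[OF head] \<open>0 < e / 3\<close>] by blast
  show ?thesis
  proof (rule that[of "F0 \<union> F1 \<union> F2"])
    show "finite (F0 \<union> F1 \<union> F2)"
      using F0(1) F1(1) F2(1) by simp
    fix R
    assume R: "R \<inter> (F0 \<union> F1 \<union> F2) = {}"
    then have "R \<inter> F0 = {}"
      by blast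
    have "l2_norm (commutator R (proj (- F0) \<xi>)) \<le> K * l2_norm (proj (- F0) \<xi>)"
      by (rule K(2)[OF rest])
    also have "\<dots> \<le> K * (e / (3 * (K + 1)))"
      using F0(2)[of "- F0"] K(1) by (intro mult_left_mono) auto
    also have "\<dots> \<le> e / 3"
      using K(1) \<open>0 < e\<close> by (simp add: field_simps)
    finally have "l2_norm (commutator R (proj (- F0) \<xi>)) \<le> e / 3" .
    moreover have "l2_norm (h (proj R \<xi>)) \<le> l2_norm (proj R (h \<xi>)) +
        l2_norm (proj R (h (proj F0 \<xi>))) + l2_norm (commutator R (proj (- F0) \<xi>))"
      using \<xi> \<open>R \<inter> F0 = {}\<close> by (rule l2_norm_h_proj_le)
    moreover have "l2_norm (proj R (h \<xi>)) < e / 3" "l2_norm (proj R (h (proj F0 \<xi>))) < e / 3"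
      using R F1(2)[of R] F2(2)[of R] by auto
    ultimately show "l2_norm (h (proj R \<xi>)) < e"
      by linarith
  qed
qed

lemma h_has_sum:
  assumes "\<xi> \<in> D"
  shows "l2_has_sum (\<lambda>x. (\<lambda>z. l2_inner \<xi> (delta x) * h (delta x) z)) (h \<xi>)"
  unfolding l2_has_sum_def
proof (intro allI impI)
  fix e :: real
  assume "0 < e"
  then obtain F where F: "finite F" "\<And>R. R \<inter> F = {} \<Longrightarrow> l2_norm (h (proj R \<xi>)) < e"
    using h_proj_tail[OF assms] by blast
  have "l2_norm (h \<xi> - (\<Sum>x\<in>G. (\<lambda>z. l2_inner \<xi> (delta x) * h (delta x) z))) < e"
    if "finite G" "F \<subseteq> G" for G
  proof -
    have "\<xi> = proj G \<xi> + proj (- G) \<xi>"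
      by (auto simp: proj_def fun_eq_iff)
    then have "h \<xi> = h (proj G \<xi>) + h (proj (- G) \<xi>)"
      by (metis h_add proj_in_dom[OF assms])
    then have "h \<xi> - (\<Sum>x\<in>G. (\<lambda>z. l2_inner \<xi> (delta x) * h (delta x) z)) = h (proj (- G) \<xi>)"
      by (simp add: h_proj_finite[OF \<open>finite G\<close>] l2_inner_delta)
    then show ?thesis
      using F(2)[of "- G"] \<open>F \<subseteq> G\<close> by auto
  qed
  then show "\<exists>F. finite F \<and> (\<forall>G. finite G \<and> F \<subseteq> G \<longrightarrow>
      l2_norm (h \<xi> - (\<Sum>x\<in>G. (\<lambda>z. l2_inner \<xi> (delta x) * h (delta x) z))) < e)"
    using F(1) by blast
qed

end

theorem theorem4p1p15:
  fixes D :: "('a::metric_space \<Rightarrow> complex) set"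
    and h :: "('a \<Rightarrow> complex) \<Rightarrow> ('a \<Rightarrow> complex)"
  assumes "uniformly_locally_finite TYPE('a)"
    and "coarse_operator D h"
  shows "(\<forall>\<xi>\<in>D. l2_has_sum (\<lambda>x. (\<lambda>z. l2_inner \<xi> (delta x) * h (delta x) z)) (h \<xi>))
         \<and> admissible D h"
proof -
  interpret coarse D h
    using assms(2) by (rule coarse.intro)
  have sums: "\<forall>\<xi>\<in>D. l2_has_sum (\<lambda>x. (\<lambda>z. l2_inner \<xi> (delta x) * h (delta x) z)) (h \<xi>)"
    using h_has_sum by blast
  then have "admissible D h"
    using closed_operator c00_subset_dom by (simp add: admissible_def)
  with sums show ?thesis
    by blast
qed

end
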